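(* Let $\mathfrak{C}$ be a clustering functor on $\mathcal{M}^{gen}$ that is scale invariant: for every finite metric space $(X,d_X)$ and every $\lambda>0$, $\mathfrak{C}(X,\lambda\cdot d_X)=\mathfrak{C}(X,d_X)$. Then either $\mathfrak{C}$ assigns to every finite metric space $X$ the partition of $X$ into singletons, or $\mathfrak{C}$ assigns to every finite metric space $X$ the partition with only one block.
   Context: $\mathcal{M}^{gen}$ is the category whose objects are finite metric spaces and whose morphisms $f:(X,d_X)\to(Y,d_Y)$ are distance non-increasing maps. For a set map $f:X\to Y$ and a partition $P_Y$ of $Y$, $f^*(P_Y)$ is the partition of $X$ with blocks the nonempty sets $f^{-1}(B)$, $B\in P_Y$. A clustering functor on $\mathcal{M}^{gen}$ is a rule $\mathfrak{C}$ assigning to every finite metric space $(X,d_X)$ a partition $\mathfrak{C}(X,d_X)$ of $X$ such that for every morphism $f:X\to Y$, $\mathfrak{C}(X)$ refines $f^*(\mathfrak{C}(Y))$. *)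

theory Defs
  imports Complex_Main "HOL-Library.Disjoint_Sets"
begin

text \<open>Finite metric spaces are represented by a finite carrier X :: nat set together with
  a distance function d; only the values of d on X matter.\<close>

definition finite_metric_space :: "'a set \<Rightarrow> ('a \<Rightarrow> 'a \<Rightarrow> real) \<Rightarrow> bool" where
  "finite_metric_space X d \<longleftrightarrow> finite X \<and>
     (\<forall>x\<in>X. \<forall>y\<in>X. d x y \<ge> 0 \<and> (d x y = 0 \<longleftrightarrow> x = y) \<and> d x y = d y x) \<and>
     (\<forall>x\<in>X. \<forall>y\<in>X. \<forall>z\<in>X. d x z \<le> d x y + d y z)"

definition distance_nonincreasing ::
  "'a set \<Rightarrow> ('a \<Rightarrow> 'a \<Rightarrow> real) \<Rightarrow> 'a set \<Rightarrow> ('a \<Rightarrow> 'a \<Rightarrow> real) \<Rightarrow> ('a \<Rightarrow> 'a) \<Rightarrow> bool" where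
  "distance_nonincreasing X dX Y dY f \<longleftrightarrow> f ` X \<subseteq> Y \<and>
     (\<forall>x\<in>X. \<forall>y\<in>X. dY (f x) (f y) \<le> dX x y)"

definition pullback_partition :: "'a set \<Rightarrow> ('a \<Rightarrow> 'b) \<Rightarrow> 'b set set \<Rightarrow> 'a set set" where
  "pullback_partition X f P = {X \<inter> f -` B | B. B \<in> P \<and> X \<inter> f -` B \<noteq> {}}"

definition refines :: "'a set set \<Rightarrow> 'a set set \<Rightarrow> bool" where
  "refines P Q \<longleftrightarrow> (\<forall>A\<in>P. \<exists>B\<in>Q. A \<subseteq> B)"

definition clustering_functor :: "(nat set \<Rightarrow> (nat \<Rightarrow> nat \<Rightarrow> real) \<Rightarrow> nat set set) \<Rightarrow> bool" where
  "clustering_functor C \<longleftrightarrow>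
     (\<forall>X d. finite_metric_space X d \<longrightarrow> partition_on X (C X d)) \<and>
     (\<forall>X dX Y dY f. finite_metric_space X dX \<longrightarrow> finite_metric_space Y dY \<longrightarrow>
        distance_nonincreasing X dX Y dY f \<longrightarrow>
        refines (C X dX) (pullback_partition X f (C Y dY)))"

definition scale_invariant :: "(nat set \<Rightarrow> (nat \<Rightarrow> nat \<Rightarrow> real) \<Rightarrow> nat set set) \<Rightarrow> bool" where
  "scale_invariant C \<longleftrightarrow>
     (\<forall>X d (c::real). finite_metric_space X d \<longrightarrow> c > 0 \<longrightarrow>
        C X (\<lambda>x y. c * d x y) = C X d)"

end

theory Submission
  imports Defs
begin

text \<open>Everything is decided on the two-point space with both points at distance 1, which by
  scale invariance is clustered the same way at every distance \<open>c > 0\<close>. If its two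
  points share a cluster, then for any \<open>x \<noteq> y\<close> in a finite metric space the map sending the
  two points to \<open>x, y\<close> is a morphism from the two-point space scaled by \<open>d x y\<close>, so \<open>x\<close> and
  \<open>y\<close> share a cluster. Otherwise, if \<open>x \<noteq> y\<close> shared a cluster, collapsing everything except
  \<open>x\<close> to one point would be a morphism onto the two-point space scaled by the distance from
  \<open>x\<close> to the rest, forcing its two points into one cluster.\<close>

definition same_cluster :: "'a set set \<Rightarrow> 'a \<Rightarrow> 'a \<Rightarrow> bool" where
  "same_cluster P x y \<longleftrightarrow> (\<exists>B\<in>P. x \<in> B \<and> y \<in> B)"

definition discrete_metric :: "'a \<Rightarrow> 'a \<Rightarrow> real" where
  "discrete_metric a b = (if a = b then 0 else 1)"

lemma partition_on_eq_single_block: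
  assumes P: "partition_on X P" and "X \<noteq> {}"
    and clustered: "\<And>x y. x \<in> X \<Longrightarrow> y \<in> X \<Longrightarrow> same_cluster P x y"
  shows "P = {X}"
proof -
  have "A = X" if A: "A \<in> P" for A
  proof
    show "A \<subseteq> X" using P A by (auto simp: partition_on_def)
    obtain a where a: "a \<in> A" using partition_onD3[OF P] A by (metis ex_in_conv)
    then have "a \<in> X" using P A by (auto simp: partition_on_def)
    show "X \<subseteq> A"
    proof
      fix x assume "x \<in> X"
      with clustered[OF \<open>a \<in> X\<close>] obtain B where B: "B \<in> P" "a \<in> B" "x \<in> B"
        by (auto simp: same_cluster_def)
      then have "A = B" using partition_onD2[OF P] A a by (meson disjointD disjoint_iff)
      with B show "x \<in> A" by simp
    qed
  qed
  moreover have "P \<noteq> {}" using P \<open>X \<noteq> {}\<close> by (auto simp: partition_on_def)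
  ultimately show ?thesis by blast
qed

lemma partition_on_eq_singletons:
  assumes P: "partition_on X P"
    and separated: "\<And>x y. same_cluster P x y \<Longrightarrow> x = y"
  shows "P = {{x} | x. x \<in> X}"
proof -
  have block: "A = {a}" if "A \<in> P" "a \<in> A" for A a
    using that separated by (auto simp: same_cluster_def)
  show ?thesis
  proof (intro set_eqI iffI)
    fix A assume A: "A \<in> P"
    then obtain a where "a \<in> A" using partition_onD3[OF P] by (metis ex_in_conv)
    moreover have "a \<in> X" using P A \<open>a \<in> A\<close> by (auto simp: partition_on_def)
    ultimately show "A \<in> {{x} | x. x \<in> X}" using block[OF A] by auto
  next
    fix A assume "A \<in> {{x} | x. x \<in> X}"
    then obtain x where x: "A = {x}" "x \<in> X" by auto
    then obtain B where "B \<in> P" "x \<in> B" using P by (auto simp: partition_on_def)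
    with x block show "A \<in> P" by auto
  qed
qed

lemma same_cluster_pullback:
  assumes "refines P (pullback_partition X f Q)" and "same_cluster P x y"
  shows "same_cluster Q (f x) (f y)"
  using assms by (fastforce simp: refines_def pullback_partition_def same_cluster_def)

lemma clustering_functor_same_cluster_image:
  assumes "clustering_functor C"
    and "finite_metric_space X dX" "finite_metric_space Y dY"
    and "distance_nonincreasing X dX Y dY f"
    and "same_cluster (C X dX) x y"
  shows "same_cluster (C Y dY) (f x) (f y)"
proof -
  have "refines (C X dX) (pullback_partition X f (C Y dY))"
    using assms(1-4) unfolding clustering_functor_def by blast
  then show ?thesis using assms(5) by (rule same_cluster_pullback)
qed

lemma clustering_functor_partition_on:
  "clustering_functor C \<Longrightarrow> finite_metric_space X d \<Longrightarrow> partition_on X (C X d)"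
  by (simp add: clustering_functor_def)

lemma finite_metric_space_scaled_discrete:
  "finite X \<Longrightarrow> c > 0 \<Longrightarrow> finite_metric_space X (\<lambda>a b. c * discrete_metric a b)"
  by (auto simp: finite_metric_space_def discrete_metric_def)

lemma finite_metric_space_separation:
  assumes "finite_metric_space X d" and "x \<in> X"
  obtains c where "c > 0" and "\<And>w. w \<in> X \<Longrightarrow> w \<noteq> x \<Longrightarrow> c \<le> d x w"
proof
  let ?D = "insert 1 (d x ` (X - {x}))"
  have "finite ?D" using assms(1) by (simp add: finite_metric_space_def)
  moreover have "\<forall>r\<in>?D. r > 0"
    using assms by (auto simp: finite_metric_space_def order_le_less)
  ultimately show "Min ?D > 0" by simp
  show "Min ?D \<le> d x w" if "w \<in> X" "w \<noteq> x" for w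
    using that \<open>finite ?D\<close> by (intro Min_le) auto
qed

lemma distance_nonincreasing_onto_pair:
  assumes "finite_metric_space X d" and "x \<in> X" "y \<in> X"
  shows "distance_nonincreasing {0, 1} (\<lambda>a b. d x y * discrete_metric a b) X d
           (\<lambda>n. if n = 0 then x else y)"
proof -
  have "d x x = 0" "d y y = 0" "d y x = d x y"
    using assms by (auto simp: finite_metric_space_def)
  with assms(2,3) show ?thesis
    by (auto simp: distance_nonincreasing_def discrete_metric_def)
qed

lemma distance_nonincreasing_collapse_complement:
  assumes "finite_metric_space X d" and "\<And>w. w \<in> X \<Longrightarrow> w \<noteq> x \<Longrightarrow> c \<le> d x w"
  shows "distance_nonincreasing X d {0, 1} (\<lambda>a b. c * discrete_metric a b)
           (\<lambda>n. if n = x then 0 else 1)"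
  unfolding distance_nonincreasing_def
proof (intro conjI ballI)
  fix z w assume "z \<in> X" "w \<in> X"
  moreover have "d z w \<ge> 0" "d z w = d w z"
    using assms(1) \<open>z \<in> X\<close> \<open>w \<in> X\<close> by (auto simp: finite_metric_space_def)
  ultimately show "c * discrete_metric (if z = x then 0 else 1) (if w = x then 0 else 1) \<le> d z w"
    using assms(2)[OF \<open>z \<in> X\<close>] assms(2)[OF \<open>w \<in> X\<close>] by (auto simp: discrete_metric_def)
qed auto

context
  fixes C :: "nat set \<Rightarrow> (nat \<Rightarrow> nat \<Rightarrow> real) \<Rightarrow> nat set set"
  assumes clustering: "clustering_functor C" and scale_inv: "scale_invariant C"
begin

abbreviation two_point_clustered :: bool where
  "two_point_clustered \<equiv> same_cluster (C {0, 1} discrete_metric) 0 1"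

lemma two_point_scaled:
  assumes "c > 0"
  shows "C {0, 1} (\<lambda>a b. c * discrete_metric a b) = C {0, 1} discrete_metric"
proof -
  have "finite_metric_space {0, 1} (discrete_metric :: nat \<Rightarrow> nat \<Rightarrow> real)"
    using finite_metric_space_scaled_discrete[of "{0, 1::nat}" 1] by simp
  with scale_inv assms show ?thesis unfolding scale_invariant_def by blast
qed

lemma same_cluster_if_two_point_clustered:
  assumes "two_point_clustered" and X: "finite_metric_space X d" and "x \<in> X" "y \<in> X"
  shows "same_cluster (C X d) x y"
proof (cases "x = y")
  case True
  with clustering_functor_partition_on[OF clustering X] \<open>x \<in> X\<close> show ?thesis
    by (auto simp: partition_on_def same_cluster_def)
next
  case False
  then have "d x y > 0"
    using X \<open>x \<in> X\<close> \<open>y \<in> X\<close> by (auto simp: finite_metric_space_def order_le_less)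
  with assms(1) have "same_cluster (C {0, 1} (\<lambda>a b. d x y * discrete_metric a b)) 0 1"
    by (simp only: two_point_scaled)
  from clustering_functor_same_cluster_image[OF clustering
      finite_metric_space_scaled_discrete[OF _ \<open>d x y > 0\<close>] X
      distance_nonincreasing_onto_pair[OF X \<open>x \<in> X\<close> \<open>y \<in> X\<close>] this]
  show ?thesis by simp
qed

lemma same_cluster_imp_two_point_clustered:
  assumes X: "finite_metric_space X d" and "same_cluster (C X d) x y" and "x \<noteq> y"
  shows "two_point_clustered"
proof -
  have "x \<in> X"
    using clustering_functor_partition_on[OF clustering X] assms(2)
    by (auto simp: partition_on_def same_cluster_def)
  then obtain c where "c > 0" and c: "\<And>w. w \<in> X \<Longrightarrow> w \<noteq> x \<Longrightarrow> c \<le> d x w"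
    using finite_metric_space_separation[OF X] by blast
  from clustering_functor_same_cluster_image[OF clustering X
      finite_metric_space_scaled_discrete[OF _ \<open>c > 0\<close>]
      distance_nonincreasing_collapse_complement[OF X c] assms(2)]
  have "same_cluster (C {0, 1} (\<lambda>a b. c * discrete_metric a b)) 0 1"
    using \<open>x \<noteq> y\<close> by simp
  with \<open>c > 0\<close> show ?thesis by (simp only: two_point_scaled)
qed

end

theorem mainTheorem6:
  fixes C :: "nat set \<Rightarrow> (nat \<Rightarrow> nat \<Rightarrow> real) \<Rightarrow> nat set set"
  assumes "clustering_functor C"
    and "scale_invariant C"
  shows "(\<forall>X d. finite_metric_space X d \<longrightarrow> C X d = {{x} | x. x \<in> X})
       \<or> (\<forall>X d. finite_metric_space X d \<and> X \<noteq> {} \<longrightarrow> C X d = {X})"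
proof (cases "same_cluster (C {0, 1} discrete_metric) 0 1")
  case True
  have "C X d = {X}" if X: "finite_metric_space X d" and "X \<noteq> {}" for X d
    using clustering_functor_partition_on[OF assms(1) X] \<open>X \<noteq> {}\<close>
      same_cluster_if_two_point_clustered[OF assms True X]
    by (rule partition_on_eq_single_block)
  then show ?thesis by blast
next
  case False
  have "C X d = {{x} | x. x \<in> X}" if X: "finite_metric_space X d" for X d
  proof (rule partition_on_eq_singletons[OF clustering_functor_partition_on[OF assms(1) X]])
    show "x = y" if "same_cluster (C X d) x y" for x y
      using same_cluster_imp_two_point_clustered[OF assms X that] False by blast
  qed
  then show ?thesis by blast
qed

end
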